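(* Let $G=(L\cup R,E)$ be a bipartite graph in which every node of $L$ has degree 2, and let $d_{c,\max}$ be the maximum degree of nodes in $R$. Let $k\ge 2$ be an integer and let $\mathcal{S}\subset L$ be such that the induced subgraph $G(\mathcal{S})$ is a tree whose longest path has length $2k-2$. Then \[|\mathcal{S}|\le \sum_{i=0}^{k-2}(d_{c,\max}-1)^{\lfloor (i+1)/2\rfloor}.\]
   Context: For $\mathcal{S}\subset L$, $\Gamma(\mathcal{S})$ is the set of neighbors of $\mathcal{S}$ in $R$, and the induced subgraph $G(\mathcal{S})$ has node set $\mathcal{S}\cup\Gamma(\mathcal{S})$ and all edges of $G$ between $\mathcal{S}$ and $\Gamma(\mathcal{S})$. The length of a path is its number of edges. *)

theory Defs
  imports Main
begin

text \<open>A bipartite graph G = (L \<union> R, E) is given by finite sets L, R and an edge set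
  E \<subseteq> L \<times> R. Vertices of the whole graph live in the sum type 'a + 'b
  (Inl for left nodes, Inr for right nodes).\<close>

definition deg_L :: "('a \<times> 'b) set \<Rightarrow> 'a \<Rightarrow> nat" where
  "deg_L E l = card {r. (l, r) \<in> E}"

definition deg_R :: "('a \<times> 'b) set \<Rightarrow> 'b \<Rightarrow> nat" where
  "deg_R E r = card {l. (l, r) \<in> E}"

definition dc_max :: "'b set \<Rightarrow> ('a \<times> 'b) set \<Rightarrow> nat" where
  "dc_max R E = Max (deg_R E ` R)"

definition nbrs :: "('a \<times> 'b) set \<Rightarrow> 'a set \<Rightarrow> 'b set" where
  "nbrs E S = {r. \<exists>l\<in>S. (l, r) \<in> E}"

definition ind_verts :: "('a \<times> 'b) set \<Rightarrow> 'a set \<Rightarrow> ('a + 'b) set" where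
  "ind_verts E S = Inl ` S \<union> Inr ` nbrs E S"

definition ind_adj :: "('a \<times> 'b) set \<Rightarrow> 'a set \<Rightarrow> ('a + 'b) \<Rightarrow> ('a + 'b) \<Rightarrow> bool" where
  "ind_adj E S u v \<longleftrightarrow> (\<exists>l r. l \<in> S \<and> (l, r) \<in> E \<and>
      ((u = Inl l \<and> v = Inr r) \<or> (u = Inr r \<and> v = Inl l)))"

definition is_path :: "'v set \<Rightarrow> ('v \<Rightarrow> 'v \<Rightarrow> bool) \<Rightarrow> 'v list \<Rightarrow> bool" where
  "is_path V adj p \<longleftrightarrow> p \<noteq> [] \<and> set p \<subseteq> V \<and> distinct p \<and>
     (\<forall>i. Suc i < length p \<longrightarrow> adj (p ! i) (p ! Suc i))"

definition path_len :: "'v list \<Rightarrow> nat" where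
  "path_len p = length p - 1"

definition is_cycle :: "'v set \<Rightarrow> ('v \<Rightarrow> 'v \<Rightarrow> bool) \<Rightarrow> 'v list \<Rightarrow> bool" where
  "is_cycle V adj c \<longleftrightarrow> 3 \<le> length c \<and> is_path V adj c \<and> adj (last c) (hd c)"

definition graph_connected :: "'v set \<Rightarrow> ('v \<Rightarrow> 'v \<Rightarrow> bool) \<Rightarrow> bool" where
  "graph_connected V adj \<longleftrightarrow>
     (\<forall>u\<in>V. \<forall>v\<in>V. \<exists>p. is_path V adj p \<and> hd p = u \<and> last p = v)"

definition is_tree :: "'v set \<Rightarrow> ('v \<Rightarrow> 'v \<Rightarrow> bool) \<Rightarrow> bool" where
  "is_tree V adj \<longleftrightarrow> V \<noteq> {} \<and> graph_connected V adj \<and> \<not> (\<exists>c. is_cycle V adj c)"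

definition longest_path_len :: "'v set \<Rightarrow> ('v \<Rightarrow> 'v \<Rightarrow> bool) \<Rightarrow> nat" where
  "longest_path_len V adj = Max (path_len ` {p. is_path V adj p})"

end

theory Submission
  imports Defs
begin

text \<open>
  Let P be a longest path of the tree G(S); it has 2k - 1 vertices. It cannot end in a node of L:
  such a node has a second neighbour, which would either extend P or close a cycle. So P starts in R,
  and its midpoint c lies in L iff k - 1 is odd. Every vertex lies within distance k - 1 of c,
  since otherwise splicing P with a path towards that vertex would give a path longer than P.
  Counting breadth-first from c, a node of L has one child and a node of R at most
  d_{c,max} - 1 children, so the nodes of L at each distance from c are bounded by two consecutive
  summands of the stated sum.
\<close>

lemma is_path_iff_successively:
  "is_path V adj p \<longleftrightarrow> p \<noteq> [] \<and> set p \<subseteq> V \<and> distinct p \<and> successively adj p"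
  unfolding is_path_def successively_conv_nth by blast

lemma successively_take: "successively P xs \<Longrightarrow> successively P (take n xs)"
  by (metis append_take_drop_id successively_append_iff)

lemma successively_drop: "successively P xs \<Longrightarrow> successively P (drop n xs)"
  by (metis append_take_drop_id successively_append_iff)

lemma successively_take_append_drop:
  assumes "successively P xs" "successively P ys"
    and "i < length xs" "j < length ys" "xs ! i = ys ! j"
  shows "successively P (take i xs @ drop j ys)"
proof -
  have "take i xs @ drop j ys = take (Suc i) xs @ drop (Suc j) ys"
    using assms(3-5) by (simp add: take_Suc_conv_app_nth Cons_nth_drop_Suc)
  moreover have "P (last (take (Suc i) xs)) (hd (drop (Suc j) ys))" if "drop (Suc j) ys \<noteq> []"
    using that assms(3,5) successively_nth[OF assms(2), of j]
    by (simp add: hd_drop_conv_nth take_Suc_conv_app_nth)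
  ultimately show ?thesis
    using successively_take[OF assms(1)] successively_drop[OF assms(2)]
    by (auto simp: successively_append_iff)
qed

lemma is_path_rev:
  assumes "\<And>u v. adj u v \<Longrightarrow> adj v u"
  shows "is_path V adj p \<Longrightarrow> is_path V adj (rev p)"
  using assms by (auto simp: is_path_iff_successively intro: successively_mono)

primrec ball :: "('v \<Rightarrow> 'v \<Rightarrow> bool) \<Rightarrow> 'v \<Rightarrow> nat \<Rightarrow> 'v set" where
  "ball adj c 0 = {c}"
| "ball adj c (Suc n) = ball adj c n \<union> {v. \<exists>u\<in>ball adj c n. adj u v}"

lemma ball_mono: "n \<le> n' \<Longrightarrow> ball adj c n \<subseteq> ball adj c n'"
  by (induction n') (auto simp: le_Suc_eq)

lemma ball_subset:
  assumes "c \<in> V" "\<And>u v. adj u v \<Longrightarrow> v \<in> V"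
  shows "ball adj c n \<subseteq> V"
  using assms by (induction n) auto

lemma last_in_ball:
  "successively adj p \<Longrightarrow> p \<noteq> [] \<Longrightarrow> last p \<in> ball adj (hd p) (length p - 1)"
proof (induction p rule: rev_induct)
  case (snoc x xs)
  show ?case
  proof (cases "xs = []")
    case False
    then have "last xs \<in> ball adj (hd xs) (length xs - 1)" "adj (last xs) x"
      using snoc by (auto simp: successively_append_iff)
    then show ?thesis using False by (cases "length xs") auto
  qed simp
qed simp

lemma in_ball_midpoint_if_meets_right_half:
  assumes P: "is_path V adj P" "length P = Suc (2 * m)"
    and longest: "\<And>p. is_path V adj p \<Longrightarrow> length p \<le> length P"
    and q: "is_path V adj q" "last q = v"
    and meet: "j < length q" "i < length P" "q ! j = P ! i" "m \<le> i"
    and avoid: "set (drop (Suc j) q) \<inter> set P = {}"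
  shows "v \<in> ball adj (P ! m) m"
proof -
  \<comment> \<open>X is a path, hence no longer than P, and its suffix from P ! m is a walk to v.\<close>
  define X where "X = take i P @ drop j q"
  have drop_j: "drop j q = P ! i # drop (Suc j) q"
    using meet Cons_nth_drop_Suc[of j q] by simp
  have "P ! i \<in> set (drop i P)"
    using meet by (metis Cons_nth_drop_Suc list.set_intros(1))
  then have "P ! i \<notin> set (take i P)"
    using P set_take_disj_set_drop_if_distinct[of P i i]
    by (auto simp: is_path_iff_successively)
  then have "is_path V adj X"
    using P(1) q(1) meet avoid set_take_subset[of i P] set_drop_subset[of j q]
      successively_take_append_drop[of adj P q i j] distinct_drop[of q "Suc j"]
    by (auto simp: X_def is_path_iff_successively drop_j)
  then have "length X - Suc m \<le> m"
    using longest P(2) by fastforce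
  have "X ! m = P ! m"
    using meet by (cases "m = i") (auto simp: X_def nth_append drop_j)
  moreover have "last X = v"
    using q meet by (simp add: X_def)
  moreover have "successively adj (drop m X)"
    using \<open>is_path V adj X\<close> by (simp add: is_path_iff_successively successively_drop)
  moreover have "m < length X"
    using meet by (simp add: X_def)
  ultimately have "v \<in> ball adj (P ! m) (length X - Suc m)"
    using last_in_ball[of adj "drop m X"] by (simp add: hd_drop_conv_nth)
  then show ?thesis
    using ball_mono[OF \<open>length X - Suc m \<le> m\<close>, of adj "P ! m"] by blast
qed

lemma in_ball_midpoint_longest_path:
  assumes sym: "\<And>u v. adj u v \<Longrightarrow> adj v u" and conn: "graph_connected V adj"
    and P: "is_path V adj P" "length P = Suc (2 * m)"
    and longest: "\<And>p. is_path V adj p \<Longrightarrow> length p \<le> length P"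
    and v: "v \<in> V"
  shows "v \<in> ball adj (P ! m) m"
proof -
  have "P ! m \<in> V"
    using P by (auto simp: is_path_iff_successively)
  then obtain q where q: "is_path V adj q" "hd q = P ! m" "last q = v"
    using conn v unfolding graph_connected_def by blast
  define J where "J = {j. j < length q \<and> q ! j \<in> set P}"
  have "0 \<in> J"
    using q P(2) by (auto simp: J_def is_path_def hd_conv_nth)
  moreover have "finite J"
    by (simp add: J_def)
  ultimately obtain j where "j \<in> J" and j_max: "\<And>j'. j' \<in> J \<Longrightarrow> j' \<le> j"
    using Max_in Max_ge by blast
  then obtain i where meet: "j < length q" "i < length P" "q ! j = P ! i"
    by (auto simp: J_def in_set_conv_nth)
  have "q ! (Suc j + a) \<notin> set P" if "Suc j + a < length q" for a
    using that j_max[of "Suc j + a"] by (auto simp: J_def)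
  then have avoid: "set (drop (Suc j) q) \<inter> set P = {}"
    by (auto simp: in_set_conv_nth)
  show ?thesis
  proof (cases "m \<le> i")
    case True
    then show ?thesis
      using in_ball_midpoint_if_meets_right_half[OF P _ q(1,3) meet True avoid] longest
      by blast
  next
    case False
    have "rev P ! m = P ! m" "q ! j = rev P ! (2 * m - i)"
      using P(2) meet by (auto simp: rev_nth)
    then show ?thesis
      using in_ball_midpoint_if_meets_right_half[of V adj "rev P" m q v j "2 * m - i"]
        is_path_rev[OF sym P(1)] P(2) longest q meet False avoid
      by auto
  qed
qed

lemma adj_hd_longest_path_eq:
  assumes acyclic: "\<not> (\<exists>c. is_cycle V adj c)"
    and sym: "\<And>u v. adj u v \<Longrightarrow> adj v u" and irrefl: "\<And>v. \<not> adj v v"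
    and closed: "\<And>u v. adj u v \<Longrightarrow> v \<in> V"
    and P: "is_path V adj P"
    and longest: "\<And>p. is_path V adj p \<Longrightarrow> length p \<le> length P"
    and x: "adj (hd P) x"
  shows "x = P ! 1"
proof (cases "x \<in> set P")
  case False
  then have "is_path V adj (x # P)"
    using P closed[OF x] sym[OF x] by (auto simp: is_path_iff_successively successively_Cons)
  then show ?thesis
    using longest by fastforce
next
  case True
  then obtain j where j: "j < length P" "P ! j = x"
    by (auto simp: in_set_conv_nth)
  have "P \<noteq> []"
    using P by (simp add: is_path_def)
  then have "j \<noteq> 0"
    using j x irrefl by (metis hd_conv_nth)
  moreover have "is_cycle V adj (take (Suc j) P)" if "2 \<le> j"
  proof -
    have "last (take (Suc j) P) = x"
      using j by (simp add: take_Suc_conv_app_nth)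
    moreover have "hd (take (Suc j) P) = hd P"
      by (simp add: hd_take)
    ultimately show ?thesis
      using that P j sym[OF x] set_take_subset[of "Suc j" P]
      by (auto simp: is_cycle_def is_path_iff_successively intro: successively_take)
  qed
  ultimately have "j = 1"
    using acyclic by fastforce
  then show ?thesis
    using j by simp
qed

lemma isl_nth_path:
  assumes bipartite: "\<And>u v. adj u v \<Longrightarrow> isl u \<noteq> isl v" and p: "successively adj p"
  shows "i < length p \<Longrightarrow> isl (p ! i) \<longleftrightarrow> (isl (p ! 0) \<longleftrightarrow> even i)"
proof (induction i)
  case (Suc i)
  then show ?case
    using bipartite[OF successively_nth[OF p, of i]] by auto
qed simp

fun sphere :: "('v \<Rightarrow> 'v \<Rightarrow> bool) \<Rightarrow> 'v \<Rightarrow> nat \<Rightarrow> 'v set" where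
  "sphere adj c 0 = {c}"
| "sphere adj c (Suc n) = ball adj c (Suc n) - ball adj c n"

lemma ball_Suc_eq_Un_sphere: "ball adj c (Suc n) = ball adj c n \<union> sphere adj c (Suc n)"
  by auto

lemma sphere_Suc_subset:
  "sphere adj c (Suc n) \<subseteq> (\<Union>w\<in>sphere adj c n. {v. adj w v} - ball adj c n)"
proof
  fix v assume v: "v \<in> sphere adj c (Suc n)"
  then obtain u where u: "u \<in> ball adj c n" "adj u v" "v \<notin> ball adj c n"
    by auto
  have "u \<in> sphere adj c n"
  proof (cases n)
    case (Suc n')
    then show ?thesis
      using u by auto
  qed (use u in simp)
  then show "v \<in> (\<Union>w\<in>sphere adj c n. {v. adj w v} - ball adj c n)"
    using u by auto
qed

lemma finite_ball:
  assumes "\<And>w. finite {v. adj w v}"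
  shows "finite (ball adj c n)"
proof (induction n)
  case (Suc n)
  have "{v. \<exists>u\<in>ball adj c n. adj u v} = (\<Union>u\<in>ball adj c n. {v. adj u v})"
    by auto
  then show ?case
    using Suc assms by simp
qed simp

lemma sphere_subset_ball: "sphere adj c n \<subseteq> ball adj c n"
  by (cases n) auto

lemma finite_sphere:
  assumes "\<And>w. finite {v. adj w v}"
  shows "finite (sphere adj c n)"
  using finite_subset[OF sphere_subset_ball finite_ball[of adj c, OF assms]] .

lemma card_sphere_Suc_Suc_le:
  assumes sym: "\<And>u v. adj u v \<Longrightarrow> adj v u" and fin: "\<And>w. finite {v. adj w v}"
    and deg: "\<And>w. w \<in> sphere adj c (Suc n) \<Longrightarrow> card {v. adj w v} \<le> Suc b"
  shows "card (sphere adj c (Suc (Suc n))) \<le> b * card (sphere adj c (Suc n))"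
proof -
  \<comment> \<open>A vertex at distance n + 1 from c has a neighbour at distance n.\<close>
  have children: "card ({v. adj w v} - ball adj c (Suc n)) \<le> b"
    if w: "w \<in> sphere adj c (Suc n)" for w
  proof -
    obtain u where "u \<in> ball adj c n" "adj w u"
      using w sym by auto
    then have "{v. adj w v} - ball adj c (Suc n) \<subseteq> {v. adj w v} - {u}" "u \<in> {v. adj w v}"
      by auto
    then have "card ({v. adj w v} - ball adj c (Suc n)) \<le> card {v. adj w v} - 1"
      using fin card_mono[of "{v. adj w v} - {u}"] by (simp add: card_Diff_singleton)
    then show ?thesis
      using deg[OF w] by linarith
  qed
  have "card (sphere adj c (Suc (Suc n)))
      \<le> card (\<Union>w\<in>sphere adj c (Suc n). {v. adj w v} - ball adj c (Suc n))"
    using finite_sphere[of adj c, OF fin] fin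
    by (intro card_mono sphere_Suc_subset) blast
  also have "\<dots> \<le> (\<Sum>w\<in>sphere adj c (Suc n). card ({v. adj w v} - ball adj c (Suc n)))"
    using card_UN_le finite_sphere[of adj c, OF fin] by blast
  also have "\<dots> \<le> card (sphere adj c (Suc n)) * b"
    using sum_bounded_above[of "sphere adj c (Suc n)"] children by (metis of_nat_id)
  finally show ?thesis
    by (simp add: mult.commute)
qed

lemma isl_sphere:
  assumes bipartite: "\<And>u v. adj u v \<Longrightarrow> isl u \<noteq> isl v"
  shows "w \<in> sphere adj c n \<Longrightarrow> isl w \<longleftrightarrow> (isl c \<longleftrightarrow> even n)"
proof (induction n arbitrary: w)
  case (Suc n)
  then obtain u where "u \<in> sphere adj c n" "adj u w"
    using sphere_Suc_subset[of adj c n] by blast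
  then show ?case
    using Suc.IH bipartite by fastforce
qed simp

declare ball.simps(2) [simp del] sphere.simps(2) [simp del]

locale bipartite_degree_bounded =
  fixes V :: "('a + 'b) set" and adj :: "'a + 'b \<Rightarrow> 'a + 'b \<Rightarrow> bool" and d :: nat
  assumes finite_V: "finite V"
    and adj_in_V: "\<And>u v. adj u v \<Longrightarrow> v \<in> V"
    and adj_sym: "\<And>u v. adj u v \<Longrightarrow> adj v u"
    and adj_bipartite: "\<And>u v. adj u v \<Longrightarrow> isl u \<noteq> isl v"
    and card_adj_isl: "\<And>w. w \<in> V \<Longrightarrow> isl w \<Longrightarrow> card {v. adj w v} \<le> 2"
    and card_adj_not_isl: "\<And>w. w \<in> V \<Longrightarrow> \<not> isl w \<Longrightarrow> card {v. adj w v} \<le> d"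
begin

lemma finite_adj: "finite {v. adj w v}"
  by (rule finite_subset[OF _ finite_V]) (auto intro: adj_in_V)

lemma sphere_subset_V: "c \<in> V \<Longrightarrow> sphere adj c n \<subseteq> V"
  by (rule subset_trans[OF sphere_subset_ball ball_subset[OF _ adj_in_V]])

lemma card_sphere_Suc_Suc_le_degree:
  assumes "c \<in> V"
  shows "card (sphere adj c (Suc (Suc n)))
    \<le> (if isl c = even (Suc n) then 1 else d - 1) * card (sphere adj c (Suc n))"
proof (rule card_sphere_Suc_Suc_le[OF adj_sym finite_adj])
  fix w assume w: "w \<in> sphere adj c (Suc n)"
  then have "w \<in> V"
    using sphere_subset_V[OF assms] by blast
  show "card {v. adj w v} \<le> Suc (if isl c = even (Suc n) then 1 else d - 1)"
  proof (cases "isl c = even (Suc n)")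
    case True
    then have "isl w"
      using isl_sphere[OF adj_bipartite w] by simp
    then show ?thesis
      using True card_adj_isl[OF \<open>w \<in> V\<close>] by simp
  next
    case False
    then have "\<not> isl w"
      using isl_sphere[OF adj_bipartite w] by simp
    then show ?thesis
      using False card_adj_not_isl[OF \<open>w \<in> V\<close>] by simp
  qed
qed

lemma card_sphere_Suc_0_le:
  assumes "c \<in> V"
  shows "card (sphere adj c (Suc 0)) \<le> (if isl c then 2 else d)"
proof -
  have "sphere adj c (Suc 0) \<subseteq> {v. adj c v}"
    using sphere_Suc_subset[of adj c 0] by auto
  then have "card (sphere adj c (Suc 0)) \<le> card {v. adj c v}"
    by (rule card_mono[OF finite_adj])
  then show ?thesis
    using card_adj_isl[OF assms] card_adj_not_isl[OF assms] by (cases "isl c") auto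
qed

text \<open>The bound is the sum of the summands with indices n and n + 1 in the theorem.\<close>

lemma card_sphere_Suc_le_if_isl:
  assumes "c \<in> V"
  shows "isl c = odd n \<Longrightarrow>
    card (sphere adj c (Suc n)) \<le> (d - 1) ^ ((n + 1) div 2) + (d - 1) ^ ((n + 2) div 2)"
proof (induction n rule: nat_induct2)
  case 0
  then show ?case
    using card_sphere_Suc_0_le[OF assms] by simp
next
  case 1
  then have "card (sphere adj c (Suc 1)) \<le> (d - 1) * card (sphere adj c (Suc 0))"
    using card_sphere_Suc_Suc_le_degree[OF assms, of 0] by simp
  also have "\<dots> \<le> (d - 1) * 2"
    using 1 card_sphere_Suc_0_le[OF assms] by simp
  finally show ?case
    by simp
next
  case (step n)
  have "card (sphere adj c (Suc (n + 2))) \<le> (d - 1) * card (sphere adj c (Suc (Suc n)))"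
    using card_sphere_Suc_Suc_le_degree[OF assms, of "Suc n"] step.prems by simp
  also have "\<dots> \<le> (d - 1) * card (sphere adj c (Suc n))"
    using card_sphere_Suc_Suc_le_degree[OF assms, of n] step.prems by simp
  also have "\<dots> \<le> (d - 1) * ((d - 1) ^ ((n + 1) div 2) + (d - 1) ^ ((n + 2) div 2))"
    using step by simp
  also have "\<dots> = (d - 1) ^ ((n + 2 + 1) div 2) + (d - 1) ^ ((n + 2 + 2) div 2)"
    by (simp add: distrib_left)
  finally show ?case .
qed

lemma card_ball_Int_isl_le:
  assumes "c \<in> V"
  shows "isl c = odd m \<Longrightarrow> card (ball adj c m \<inter> {v. isl v}) \<le> (\<Sum>i<m. (d - 1) ^ ((i + 1) div 2))"
proof (induction m rule: nat_induct2)
  case 0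
  then show ?case
    by simp
next
  case 1
  have "ball adj c 1 \<inter> {v. isl v} \<subseteq> {c}"
    using 1 isl_sphere[OF adj_bipartite, where c = c and n = 1] ball_Suc_eq_Un_sphere[of adj c 0] by auto
  then show ?case
    using card_mono[of "{c}"] by fastforce
next
  case (step m)
  have "sphere adj c (Suc (Suc m)) \<inter> {v. isl v} = {}"
    using step.prems isl_sphere[OF adj_bipartite, where c = c and n = "Suc (Suc m)"] by auto
  then have "ball adj c (Suc (Suc m)) \<inter> {v. isl v}
      \<subseteq> (ball adj c m \<inter> {v. isl v}) \<union> sphere adj c (Suc m)"
    unfolding ball_Suc_eq_Un_sphere by blast
  then have "card (ball adj c (m + 2) \<inter> {v. isl v})
      \<le> card ((ball adj c m \<inter> {v. isl v}) \<union> sphere adj c (Suc m))"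
    using finite_ball[of adj c, OF finite_adj] finite_sphere[of adj c, OF finite_adj]
    by (intro card_mono) auto
  also have "\<dots> \<le> card (ball adj c m \<inter> {v. isl v}) + card (sphere adj c (Suc m))"
    by (rule card_Un_le)
  also have "\<dots> \<le> (\<Sum>i<m + 2. (d - 1) ^ ((i + 1) div 2))"
    using step card_sphere_Suc_le_if_isl[OF assms, of m] by simp
  finally show ?case .
qed

end

lemma finite_paths: "finite V \<Longrightarrow> finite {p. is_path V adj p}"
  by (rule finite_subset[OF _ finite_subset_distinct]) (auto simp: is_path_def)

lemma path_len_le_longest_path_len:
  "finite V \<Longrightarrow> is_path V adj p \<Longrightarrow> path_len p \<le> longest_path_len V adj"
  unfolding longest_path_len_def using finite_paths by (intro Max_ge) auto

lemma obtain_longest_path: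
  assumes "finite V" "V \<noteq> {}" "longest_path_len V adj = 2 * m"
  obtains P where "is_path V adj P" "length P = Suc (2 * m)"
    "\<And>p. is_path V adj p \<Longrightarrow> length p \<le> length P"
proof -
  obtain v where "v \<in> V"
    using assms(2) by blast
  then have "[v] \<in> {p. is_path V adj p}"
    by (simp add: is_path_def)
  then have "longest_path_len V adj \<in> path_len ` {p. is_path V adj p}"
    unfolding longest_path_len_def using finite_paths[OF assms(1)] by (intro Max_in) auto
  then obtain P where P: "is_path V adj P" "path_len P = 2 * m"
    using assms(3) by auto
  then have length: "length P = Suc (2 * m)"
    by (cases P) (auto simp: path_len_def is_path_def)
  have longest: "length p \<le> length P" if "is_path V adj p" for p
    using path_len_le_longest_path_len[OF assms(1) that] assms(3) length
    by (simp add: path_len_def)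
  show ?thesis
    by (rule that[OF P(1) length longest])
qed

lemma ind_adj_sym: "ind_adj E S u v \<Longrightarrow> ind_adj E S v u"
  unfolding ind_adj_def by blast

lemma ind_adj_bipartite: "ind_adj E S u v \<Longrightarrow> isl u \<noteq> isl v"
  unfolding ind_adj_def by auto

lemma ind_adj_in_ind_verts: "ind_adj E S u v \<Longrightarrow> v \<in> ind_verts E S"
  unfolding ind_adj_def ind_verts_def nbrs_def by auto

lemma finite_ind_verts:
  assumes "finite L" "finite R" "E \<subseteq> L \<times> R" "S \<subseteq> L"
  shows "finite (ind_verts E S)"
proof -
  have "nbrs E S \<subseteq> R"
    using assms(3) unfolding nbrs_def by auto
  then have "finite (nbrs E S)"
    using assms(2) by (rule finite_subset)
  then show ?thesis
    unfolding ind_verts_def using finite_subset[OF assms(4,1)] by simp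
qed

lemma card_ind_adj_Inl: "l \<in> S \<Longrightarrow> card {v. ind_adj E S (Inl l) v} = deg_L E l"
proof -
  assume "l \<in> S"
  then have "{v. ind_adj E S (Inl l) v} = Inr ` {r. (l, r) \<in> E}"
    unfolding ind_adj_def by auto
  then show ?thesis
    by (simp add: card_image deg_L_def)
qed

lemma card_ind_adj_Inr:
  assumes "finite L" "E \<subseteq> L \<times> R"
  shows "card {v. ind_adj E S (Inr r) v} \<le> deg_R E r"
proof -
  have "finite {l. (l, r) \<in> E}"
    by (rule finite_subset[OF _ assms(1)]) (use assms(2) in auto)
  moreover have "{v. ind_adj E S (Inr r) v} \<subseteq> Inl ` {l. (l, r) \<in> E}"
    unfolding ind_adj_def by auto
  ultimately have "card {v. ind_adj E S (Inr r) v} \<le> card (Inl ` {l. (l, r) \<in> E} :: ('a + 'b) set)"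
    by (intro card_mono finite_imageI)
  then show ?thesis
    by (simp add: card_image deg_R_def)
qed

lemma bipartite_degree_bounded_ind:
  assumes "finite L" "finite R" "E \<subseteq> L \<times> R" "\<forall>l\<in>L. deg_L E l = 2" "S \<subseteq> L"
  shows "bipartite_degree_bounded (ind_verts E S) (ind_adj E S) (dc_max R E)"
proof
  show "finite (ind_verts E S)"
    using finite_ind_verts[OF assms(1-3,5)] .
  fix w assume w: "w \<in> ind_verts E S"
  show "card {v. ind_adj E S w v} \<le> 2" if left: "isl w"
  proof -
    obtain l where "w = Inl l" "l \<in> S"
      using w left by (auto simp: ind_verts_def)
    then show ?thesis
      using assms(4,5) card_ind_adj_Inl[of l S E] by auto
  qed
  show "card {v. ind_adj E S w v} \<le> dc_max R E" if right: "\<not> isl w"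
  proof -
    obtain r where r: "w = Inr r" "r \<in> nbrs E S"
      using w right by (auto simp: ind_verts_def)
    then have "r \<in> R"
      using assms(3) by (auto simp: nbrs_def)
    have "deg_R E r \<le> dc_max R E"
      unfolding dc_max_def using assms(2) \<open>r \<in> R\<close> by simp
    then show ?thesis
      using card_ind_adj_Inr[OF assms(1,3), of S r] r(1) by simp
  qed
qed (auto simp: ind_adj_sym ind_adj_bipartite ind_adj_in_ind_verts)

lemma hd_longest_path_not_isl:
  assumes "\<forall>l\<in>L. deg_L E l = 2" "S \<subseteq> L"
    and acyclic: "\<not> (\<exists>c. is_cycle (ind_verts E S) (ind_adj E S) c)"
    and P: "is_path (ind_verts E S) (ind_adj E S) P"
    and longest: "\<And>p. is_path (ind_verts E S) (ind_adj E S) p \<Longrightarrow> length p \<le> length P"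
  shows "\<not> isl (hd P)"
proof
  assume "isl (hd P)"
  moreover have "hd P \<in> ind_verts E S"
    using P by (auto simp: is_path_def)
  ultimately obtain l where l: "hd P = Inl l" "l \<in> S"
    by (auto simp: ind_verts_def)
  have irrefl: "\<not> ind_adj E S v v" for v
    using ind_adj_bipartite by blast
  have "x = P ! 1" if "ind_adj E S (hd P) x" for x
    using adj_hd_longest_path_eq[where adj = "ind_adj E S",
        OF acyclic ind_adj_sym irrefl ind_adj_in_ind_verts P longest that] .
  then have "{v. ind_adj E S (hd P) v} \<subseteq> {P ! 1}"
    by blast
  then have "card {v. ind_adj E S (hd P) v} \<le> card {P ! 1}"
    by (intro card_mono) auto
  moreover have "card {v. ind_adj E S (hd P) v} = 2"
    using l assms(1,2) card_ind_adj_Inl[of l S E] by auto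
  ultimately show False
    by simp
qed

lemma isl_nth_longest_path:
  assumes "\<forall>l\<in>L. deg_L E l = 2" "S \<subseteq> L"
    and acyclic: "\<not> (\<exists>c. is_cycle (ind_verts E S) (ind_adj E S) c)"
    and P: "is_path (ind_verts E S) (ind_adj E S) P"
    and longest: "\<And>p. is_path (ind_verts E S) (ind_adj E S) p \<Longrightarrow> length p \<le> length P"
    and i: "i < length P"
  shows "isl (P ! i) \<longleftrightarrow> odd i"
proof -
  have "\<not> isl (P ! 0)"
    using hd_longest_path_not_isl[OF assms(1-2) acyclic P longest] P
    by (simp add: is_path_def hd_conv_nth)
  then show ?thesis
    using isl_nth_path[of "ind_adj E S" P i, OF ind_adj_bipartite] P i
    by (simp add: is_path_iff_successively)
qed

theorem lemma8:
  fixes L :: "'a set" and R :: "'b set" and E :: "('a \<times> 'b) set"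
    and S :: "'a set" and k :: nat
  assumes "finite L" and "finite R" and "E \<subseteq> L \<times> R"
    and "\<forall>l\<in>L. deg_L E l = 2"
    and "k \<ge> 2"
    and "S \<subseteq> L"
    and "is_tree (ind_verts E S) (ind_adj E S)"
    and "longest_path_len (ind_verts E S) (ind_adj E S) = 2 * k - 2"
  shows "card S \<le> (\<Sum>i = 0..k - 2. (dc_max R E - 1) ^ ((i + 1) div 2))"
proof -
  let ?V = "ind_verts E S" and ?adj = "ind_adj E S"
  interpret G: bipartite_degree_bounded ?V ?adj "dc_max R E"
    using bipartite_degree_bounded_ind assms(1-4,6) .
  have tree: "?V \<noteq> {}" "graph_connected ?V ?adj" "\<not> (\<exists>c. is_cycle ?V ?adj c)"
    using assms(7) unfolding is_tree_def by auto
  define m where "m = k - 1"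
  have "longest_path_len ?V ?adj = 2 * m"
    using assms(5,8) by (simp add: m_def)
  then obtain P where P: "is_path ?V ?adj P" "length P = Suc (2 * m)"
    and longest: "\<And>p. is_path ?V ?adj p \<Longrightarrow> length p \<le> length P"
    using obtain_longest_path[OF G.finite_V tree(1)] by metis
  have c_isl: "isl (P ! m) = odd m"
    using isl_nth_longest_path[OF assms(4,6) tree(3) P(1) longest] P(2) by simp
  have c_V: "P ! m \<in> ?V"
    using P by (simp add: is_path_def subset_iff)
  have "Inl ` S \<subseteq> ball ?adj (P ! m) m \<inter> {v. isl v}"
    using in_ball_midpoint_longest_path[OF ind_adj_sym tree(2) P longest]
    by (auto simp: ind_verts_def)
  then have "card (Inl ` S :: ('a + 'b) set) \<le> card (ball ?adj (P ! m) m \<inter> {v. isl v})"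
    using finite_ball[of ?adj, OF G.finite_adj] by (intro card_mono) auto
  also have "\<dots> \<le> (\<Sum>i<m. (dc_max R E - 1) ^ ((i + 1) div 2))"
    using G.card_ball_Int_isl_le[OF c_V c_isl] .
  also have "\<dots> = (\<Sum>i = 0..k - 2. (dc_max R E - 1) ^ ((i + 1) div 2))"
    using assms(5) by (intro sum.cong) (auto simp: m_def)
  finally show ?thesis
    by (simp add: card_image)
qed

end
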